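(* Let $s>2$ be an integer, $A_s=\{0,1,\dots,s-1\}$, and let $A_0,A_1$ be disjoint subsets of $A_s$ with $A_0\cup A_1=A_s$, $A_0\neq A_s\neq A_1$. Let $f:[0,1]\to[0,1]$ be defined by $$f\big(\Delta^{s*}_{\alpha_1\alpha_2\dots\alpha_n\dots}\big)=\Delta^{2*}_{\beta_1\beta_2\dots\beta_n\dots},$$ where $\beta_1=0$ if $\alpha_1\in A_0$, $\beta_1=1$ if $\alpha_1\in A_1$, and for $n\ge 1$, $\beta_{n+1}=\beta_n$ if $\alpha_{n+1}=\alpha_n$ and $\beta_{n+1}=1-\beta_n$ if $\alpha_{n+1}\neq\alpha_n$. Then $f$ is nowhere monotonic: there is no open interval $(a,b)\subset[0,1]$ on which $f$ is monotone.
   Context: $L_s=A_s\times A_s\times\cdots$ denotes the space of sequences $(\alpha_n)$ with $\alpha_n\in A_s$. The $s*$-representation is an encoding of $[0,1]$ topologically equivalent to the classical $s$-adic one: there is a continuous strictly monotone surjection $h_s:[0,1]\to[0,1]$ such that $\Delta^{s*}_{\alpha_1\alpha_2\dots}=h_s\big(\sum_{n\ge1}\alpha_n s^{-n}\big)$ for every $(\alpha_n)\in L_s$. Likewise the $2*$-representation is given by a continuous strictly monotone surjection $h_2:[0,1]\to[0,1]$ via $\Delta^{2*}_{\beta_1\beta_2\dots}=h_2\big(\sum_{n\ge1}\beta_n 2^{-n}\big)$, $\beta_n\in\{0,1\}$. The value of $f(x)$ given by the formula does not depend on which $s*$-code of $x$ is used, so $f$ is a well-defined function on $[0,1]$. 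*)

theory Defs
  imports "HOL-Analysis.Analysis"
begin

text \<open>Sequences are indexed from 0: alpha 0 is the paper's alpha_1, etc.
  The binary digit sequence beta determined by the s-ary digit sequence alpha
  and the partition (A0, A1): beta_1 = 0 iff alpha_1 in A0 (equivalently 1 iff in A1),
  beta_{n+1} = beta_n if alpha_{n+1} = alpha_n, else 1 - beta_n.\<close>
fun beta_seq :: "nat set \<Rightarrow> (nat \<Rightarrow> nat) \<Rightarrow> nat \<Rightarrow> nat" where
  "beta_seq A1 \<alpha> 0 = (if \<alpha> 0 \<in> A1 then 1 else 0)"
| "beta_seq A1 \<alpha> (Suc n) =
     (if \<alpha> (Suc n) = \<alpha> n then beta_seq A1 \<alpha> n else 1 - beta_seq A1 \<alpha> n)"

definition digit_value :: "nat \<Rightarrow> (nat \<Rightarrow> nat) \<Rightarrow> real" where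
  "digit_value b d = (\<Sum>n. real (d n) / real b ^ Suc n)"

definition unit_homeo :: "(real \<Rightarrow> real) \<Rightarrow> bool" where
  "unit_homeo h \<longleftrightarrow> continuous_on {0..1} h \<and> h ` {0..1} = {0..1} \<and>
     (strict_mono_on {0..1} h \<or> monotone_on {0..1} (<) (>) h)"

end

theory Submission
  imports Defs
begin

text \<open>Suppose \<open>f\<close> were monotone on \<open>(a, b)\<close>. By continuity, \<open>h\<^sub>s\<close> maps some \<open>(p, q)\<close> into
  \<open>(a, b)\<close>, and \<open>(p, q)\<close> contains an \<open>s\<close>-adic cylinder: all codes starting with a fixed word
  \<open>c\<^sub>1 \<dots> c\<^sub>n\<close> have their value in \<open>(p, q)\<close>. As \<open>s > 2\<close>, there are digits \<open>d < e\<close> both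
  different from \<open>c\<^sub>n\<close>, and the codes \<open>c\<^sub>1 \<dots> c\<^sub>n d d d \<dots>\<close>, \<open>c\<^sub>1 \<dots> c\<^sub>n d e e \<dots>\<close>,
  \<open>c\<^sub>1 \<dots> c\<^sub>n e e e \<dots>\<close> have increasing values. The outer two change digit at the same
  places, so they have the same \<open>\<beta>\<close> and the same image under \<open>f\<close>; the middle one changes once
  more, which flips the constant tail of its \<open>\<beta>\<close>, and \<open>h\<^sub>2\<close> is injective, so its image is
  different. This contradicts monotonicity of \<open>f \<circ> h\<^sub>s\<close> on \<open>(p, q)\<close>.\<close>

lemma geometric_tail_sums:
  fixes B c :: real
  assumes "B > 1"
  shows "(\<lambda>i. if i < m then 0 else c / B ^ Suc i) sums (c / ((B - 1) * B ^ m))"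
proof -
  have "(\<lambda>i. (1/B) ^ i) sums (1 / (1 - 1/B))"
    by (rule geometric_sums) (use assms in auto)
  then have "(\<lambda>i. c / B ^ Suc m * (1/B) ^ i) sums (c / B ^ Suc m * (1 / (1 - 1/B)))"
    by (rule sums_mult)
  moreover have "(\<lambda>i. c / B ^ Suc m * (1/B) ^ i) = (\<lambda>i. (\<lambda>i. if i < m then 0 else c / B ^ Suc i) (i + m))"
    using assms by (auto simp: fun_eq_iff power_add power_divide field_simps)
  moreover have "c / B ^ Suc m * (1 / (1 - 1/B)) = c / ((B - 1) * B ^ m)"
    using assms by (simp add: field_simps)
  ultimately have "(\<lambda>i. (\<lambda>i. if i < m then 0 else c / B ^ Suc i) (i + m)) sums (c / ((B - 1) * B ^ m))"
    by metis
  then show ?thesis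
    by (subst (asm) sums_iff_shift) simp
qed

lemma summable_digit_series:
  assumes "B > 1" and "\<And>i. d i \<le> M"
  shows "summable (\<lambda>i. real (d i) / real B ^ Suc i)"
proof (rule summable_comparison_test)
  show "summable (\<lambda>i. if i < 0 then 0 else real M / real B ^ Suc i)"
    using geometric_tail_sums[of "real B" 0 "real M"] assms(1) by (auto intro: sums_summable)
  show "\<exists>N. \<forall>n\<ge>N. norm (real (d n) / real B ^ Suc n) \<le> (if n < 0 then 0 else real M / real B ^ Suc n)"
    using assms by (auto intro!: divide_right_mono)
qed

lemma digit_value_mono:
  assumes "B > 1" and "\<And>i. y i \<le> M" and "\<And>i. x i \<le> y i"
  shows "digit_value B x \<le> digit_value B y"
proof -
  have "x i \<le> M" for i
    using assms(2,3) order.trans by blast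
  then show ?thesis
    unfolding digit_value_def
    by (intro suminf_le summable_digit_series[OF assms(1)] divide_right_mono) (use assms in auto)
qed

lemma digit_value_const_tail:
  assumes "B > 1" and "\<And>i. i \<ge> m \<Longrightarrow> d i = c"
  shows "digit_value B d = (\<Sum>i<m. real (d i) / real B ^ Suc i) + real c / ((real B - 1) * real B ^ m)"
proof -
  have head: "(\<lambda>i. if i \<in> {..<m} then real (d i) / real B ^ Suc i else 0) sums (\<Sum>i<m. real (d i) / real B ^ Suc i)"
    by (rule sums_If_finite_set) simp
  have tail: "(\<lambda>i. if i < m then 0 else real c / real B ^ Suc i) sums (real c / ((real B - 1) * real B ^ m))"
    using assms(1) by (intro geometric_tail_sums) simp
  have "(\<lambda>i. (if i \<in> {..<m} then real (d i) / real B ^ Suc i else 0) +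
      (if i < m then 0 else real c / real B ^ Suc i)) = (\<lambda>i. real (d i) / real B ^ Suc i)"
    using assms(2) by (auto simp: fun_eq_iff)
  with sums_add[OF head tail] show ?thesis
    by (simp add: digit_value_def sums_iff)
qed

lemma digit_value_prefix_bounds:
  assumes "B > 1" and "\<And>i. d i < B"
  shows "(\<Sum>i<n. real (d i) / real B ^ Suc i) \<le> digit_value B d"
    and "digit_value B d \<le> (\<Sum>i<n. real (d i) / real B ^ Suc i) + 1 / real B ^ n"
proof -
  define lo hi where "lo = (\<lambda>i. if i < n then d i else 0)" and "hi = (\<lambda>i. if i < n then d i else B - 1)"
  have bounds: "lo i \<le> d i" "d i \<le> hi i" "hi i \<le> B - 1" for i
    using assms(2)[of i] by (auto simp: lo_def hi_def)
  have "digit_value B lo = (\<Sum>i<n. real (d i) / real B ^ Suc i)"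
    using digit_value_const_tail[OF assms(1), of n lo 0] by (simp add: lo_def)
  moreover have "digit_value B hi = (\<Sum>i<n. real (d i) / real B ^ Suc i) + 1 / real B ^ n"
    using digit_value_const_tail[OF assms(1), of n hi "B - 1"] assms(1) by (simp add: hi_def of_nat_diff)
  moreover have "digit_value B lo \<le> digit_value B d" "digit_value B d \<le> digit_value B hi"
    using bounds order.trans assms(1) by (metis digit_value_mono)+
  ultimately show "(\<Sum>i<n. real (d i) / real B ^ Suc i) \<le> digit_value B d"
    and "digit_value B d \<le> (\<Sum>i<n. real (d i) / real B ^ Suc i) + 1 / real B ^ n"
    by simp_all
qed

lemma digit_value_in_unit:
  assumes "B > 1" and "\<And>i. d i < B"
  shows "digit_value B d \<in> {0..1}"
  using digit_value_prefix_bounds[of B d 0] assms by simp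

lemma digit_value_ne_if_tails_differ:
  assumes "B > 1" and "\<And>i. i < m \<Longrightarrow> x i = y i"
    and "\<And>i. i \<ge> m \<Longrightarrow> x i = c" "\<And>i. i \<ge> m \<Longrightarrow> y i = c'" and "c \<noteq> c'"
  shows "digit_value B x \<noteq> digit_value B y"
proof -
  have "digit_value B x = (\<Sum>i<m. real (x i) / real B ^ Suc i) + real c / ((real B - 1) * real B ^ m)"
    by (rule digit_value_const_tail) (use assms in auto)
  moreover have "digit_value B y = (\<Sum>i<m. real (x i) / real B ^ Suc i) + real c' / ((real B - 1) * real B ^ m)"
    using assms(2) by (subst digit_value_const_tail[where c = c']) (use assms in auto)
  moreover have "(real B - 1) * real B ^ m > 0"
    using assms(1) by simp
  ultimately show ?thesis
    using assms(1,5) by simp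
qed

lemma finite_digit_expansion:
  assumes "B > 0" and "k < B ^ n"
  shows "\<exists>pre. (\<forall>i<n. pre i < B) \<and> (\<Sum>i<n. real (pre i) / real B ^ Suc i) = real k / real B ^ n"
  using assms(2)
proof (induction n arbitrary: k)
  case 0
  then show ?case by auto
next
  case (Suc n)
  have "k div B < B ^ n"
    using Suc.prems assms(1) by (metis div_less_iff_less_mult mult.commute power_Suc)
  then obtain pre where pre: "\<forall>i<n. pre i < B"
      "(\<Sum>i<n. real (pre i) / real B ^ Suc i) = real (k div B) / real B ^ n"
    using Suc.IH by blast
  have "(\<Sum>i<Suc n. real ((pre(n := k mod B)) i) / real B ^ Suc i)
      = real (k div B) / real B ^ n + real (k mod B) / real B ^ Suc n"
    using pre(2) by simp
  also have "\<dots> = (real B * real (k div B) + real (k mod B)) / real B ^ Suc n"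
    using assms(1) by (simp add: field_simps)
  also have "real B * real (k div B) + real (k mod B) = real k"
    by (metis div_mult_mod_eq mult.commute of_nat_add of_nat_mult)
  finally show ?case
    using pre(1) assms(1) by (intro exI[of _ "pre(n := k mod B)"]) auto
qed

lemma grid_interval_between:
  assumes "B > 1" and "0 \<le> p" "p < q" "q \<le> 1"
  obtains n k where "n \<ge> 1" "k < B ^ n" "p < real k / real B ^ n" "(real k + 1) / real B ^ n < q"
proof -
  obtain N where N: "2 / (q - p) < real B ^ N"
    using real_arch_pow[of "real B"] assms(1) by auto
  define n where "n = Suc N"
  have Bn: "real B ^ n > 0"
    using assms(1) by simp
  have "real B ^ N \<le> real B ^ n"
    using assms(1) by (simp add: n_def)
  with N have "2 / (q - p) < real B ^ n"
    by linarith
  then have wide: "2 < real B ^ n * (q - p)"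
    using assms(3) by (simp add: field_simps)
  define k where "k = nat \<lfloor>p * real B ^ n\<rfloor> + 1"
  have k: "real k = real_of_int \<lfloor>p * real B ^ n\<rfloor> + 1"
    using assms(2) Bn by (simp add: k_def)
  have "p * real B ^ n < real k"
    using k by linarith
  then have lower: "p < real k / real B ^ n"
    using Bn by (simp add: field_simps)
  have "real k + 1 < q * real B ^ n"
    using k wide by (simp add: algebra_simps) linarith
  then have upper: "(real k + 1) / real B ^ n < q"
    using Bn by (simp add: field_simps)
  have "q * real B ^ n \<le> real B ^ n"
    using assms(2-4) Bn by (intro mult_left_le_one_le) auto
  with \<open>real k + 1 < q * real B ^ n\<close> have "real k < real B ^ n"
    by linarith
  then have "k < B ^ n"
    by (metis of_nat_less_iff of_nat_power)
  show ?thesis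
    using \<open>k < B ^ n\<close> lower upper by (intro that[of n k]) (simp_all add: n_def)
qed

lemma cylinder_in_interval:
  assumes "B > 1" and "0 \<le> p" "p < q" "q \<le> 1"
  obtains n pre where "n \<ge> 1" "\<And>i. i < n \<Longrightarrow> pre i < B"
    and "\<And>d. (\<And>i. d i < B) \<Longrightarrow> (\<And>i. i < n \<Longrightarrow> d i = pre i) \<Longrightarrow>
           p < digit_value B d \<and> digit_value B d < q"
proof -
  obtain n k where n: "n \<ge> 1" and k: "k < B ^ n" "p < real k / real B ^ n" "(real k + 1) / real B ^ n < q"
    using grid_interval_between[OF assms] .
  obtain pre where pre: "\<forall>i<n. pre i < B" "(\<Sum>i<n. real (pre i) / real B ^ Suc i) = real k / real B ^ n"
    using finite_digit_expansion[OF _ k(1)] assms(1) by auto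
  have cylinder: "p < digit_value B d \<and> digit_value B d < q"
    if "\<And>i. d i < B" "\<And>i. i < n \<Longrightarrow> d i = pre i" for d
  proof -
    have "(\<Sum>i<n. real (d i) / real B ^ Suc i) = real k / real B ^ n"
      using pre(2) that(2) by simp
    then show ?thesis
      using digit_value_prefix_bounds[OF assms(1), of d n, OF that(1)] k(2,3)
      by (simp add: add_divide_distrib)
  qed
  show ?thesis
    by (rule that[OF n]) (use pre(1) cylinder in auto)
qed

lemma three_tail_values:
  fixes B d e :: real
  assumes "B > 1" and "d < e"
  shows "d / ((B - 1) * B ^ n) < d / B ^ Suc n + e / ((B - 1) * B ^ Suc n)"
    and "d / B ^ Suc n + e / ((B - 1) * B ^ Suc n) < e / ((B - 1) * B ^ n)"
proof -
  have pos: "(B - 1) * B ^ Suc n > 0"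
    using assms(1) by simp
  have mid: "d / B ^ Suc n + e / ((B - 1) * B ^ Suc n) = (d * (B - 1) + e) / ((B - 1) * B ^ Suc n)"
    using assms(1) by (simp add: field_simps)
  have "d / ((B - 1) * B ^ n) = d * B / ((B - 1) * B ^ Suc n)"
    using assms(1) by (simp add: field_simps)
  also have "\<dots> < (d * (B - 1) + e) / ((B - 1) * B ^ Suc n)"
    using pos assms(2) by (intro divide_strict_right_mono) (simp_all add: algebra_simps)
  finally show "d / ((B - 1) * B ^ n) < d / B ^ Suc n + e / ((B - 1) * B ^ Suc n)"
    unfolding mid .
  have "(d * (B - 1) + e) / ((B - 1) * B ^ Suc n) < e * B / ((B - 1) * B ^ Suc n)"
    using pos assms mult_strict_right_mono[of d e "B - 1"]
    by (intro divide_strict_right_mono) (simp_all add: algebra_simps)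
  also have "\<dots> = e / ((B - 1) * B ^ n)"
    using assms(1) by (simp add: field_simps)
  finally show "d / B ^ Suc n + e / ((B - 1) * B ^ Suc n) < e / ((B - 1) * B ^ n)"
    unfolding mid .
qed

lemma digit_value_tail_order:
  fixes n d e :: nat and pre :: "nat \<Rightarrow> nat"
  assumes "B > 1" and "d < e"
  defines "x \<equiv> \<lambda>i. if i < n then pre i else d"
    and "y \<equiv> \<lambda>i. if i < n then pre i else if i = n then d else e"
    and "z \<equiv> \<lambda>i. if i < n then pre i else e"
  shows "digit_value B x < digit_value B y" and "digit_value B y < digit_value B z"
proof -
  define P where "P = (\<Sum>i<n. real (pre i) / real B ^ Suc i)"
  have "digit_value B x = P + real d / ((real B - 1) * real B ^ n)"
    using digit_value_const_tail[OF assms(1), of n x d] by (simp add: x_def P_def)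
  moreover have "digit_value B y = P + real d / real B ^ Suc n + real e / ((real B - 1) * real B ^ Suc n)"
    using digit_value_const_tail[OF assms(1), of "Suc n" y e] by (simp add: y_def P_def)
  moreover have "digit_value B z = P + real e / ((real B - 1) * real B ^ n)"
    using digit_value_const_tail[OF assms(1), of n z e] by (simp add: z_def P_def)
  ultimately show "digit_value B x < digit_value B y" and "digit_value B y < digit_value B z"
    using three_tail_values[of "real B" "real d" "real e" n] assms(1,2) by simp_all
qed

lemma beta_seq_le_1: "beta_seq A \<alpha> i \<le> 1"
  by (induction i) auto

lemma digit_value_beta_seq_in_unit: "digit_value 2 (beta_seq A \<alpha>) \<in> {0..1}"
  using beta_seq_le_1[of A \<alpha>] by (intro digit_value_in_unit) (simp_all add: numeral_2_eq_2 le_imp_less_Suc)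

lemma beta_seq_prefix: "(\<And>j. j \<le> i \<Longrightarrow> \<alpha> j = \<alpha>' j) \<Longrightarrow> beta_seq A \<alpha> i = beta_seq A \<alpha>' i"
  by (induction i) auto

lemma beta_seq_const_tail:
  assumes "\<And>j. j \<ge> m \<Longrightarrow> \<alpha> j = \<alpha> m" and "i \<ge> m"
  shows "beta_seq A \<alpha> i = beta_seq A \<alpha> m"
  using assms(2)
proof (induction i rule: dec_induct)
  case (step i)
  then show ?case
    using assms(1)[of i] assms(1)[of "Suc i"] by simp
qed simp

lemma beta_seq_same_changes:
  assumes "\<alpha> 0 = \<alpha>' 0" and "\<And>i. \<alpha> (Suc i) = \<alpha> i \<longleftrightarrow> \<alpha>' (Suc i) = \<alpha>' i"
  shows "beta_seq A \<alpha> = beta_seq A \<alpha>'"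
proof
  fix i show "beta_seq A \<alpha> i = beta_seq A \<alpha>' i"
    using assms by (induction i) auto
qed

lemma beta_seq_tail_codes:
  fixes n d e :: nat and pre :: "nat \<Rightarrow> nat"
  assumes "n \<ge> 1" and "d \<noteq> pre (n - 1)" "e \<noteq> pre (n - 1)" "d \<noteq> e"
  defines "x \<equiv> \<lambda>i. if i < n then pre i else d"
    and "y \<equiv> \<lambda>i. if i < n then pre i else if i = n then d else e"
    and "z \<equiv> \<lambda>i. if i < n then pre i else e"
  shows "beta_seq A x = beta_seq A z"
    and "digit_value 2 (beta_seq A x) \<noteq> digit_value 2 (beta_seq A y)"
proof -
  show "beta_seq A x = beta_seq A z"
  proof (rule beta_seq_same_changes)
    show "x 0 = z 0"
      using assms(1) by (simp add: x_def z_def)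
    show "x (Suc i) = x i \<longleftrightarrow> z (Suc i) = z i" for i
      using assms(2,3) by (cases "Suc i = n") (auto simp: x_def z_def)
  qed
  show "digit_value 2 (beta_seq A x) \<noteq> digit_value 2 (beta_seq A y)"
  proof (rule digit_value_ne_if_tails_differ)
    have prefix: "x j = y j" if "j \<le> n" for j
      using that by (simp add: x_def y_def)
    show "beta_seq A x i = beta_seq A y i" if "i < Suc n" for i
      using that prefix by (intro beta_seq_prefix) simp
    show "beta_seq A x i = beta_seq A x n" if "i \<ge> Suc n" for i
      using that by (intro beta_seq_const_tail) (auto simp: x_def)
    have "beta_seq A y (Suc n) = 1 - beta_seq A x n"
      using assms(4) beta_seq_prefix[of n x y A] prefix by (simp add: y_def)
    then show "beta_seq A y i = 1 - beta_seq A x n" if "i \<ge> Suc n" for i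
      using that beta_seq_const_tail[of "Suc n" y i A] by (simp add: y_def)
    show "beta_seq A x n \<noteq> 1 - beta_seq A x n"
      using beta_seq_le_1[of A x n] by presburger
  qed simp
qed

lemma two_digits_avoiding:
  fixes s c :: nat
  assumes "s > 2"
  obtains d e where "d < e" "e < s" "d \<noteq> c" "e \<noteq> c"
proof (cases "c = 0")
  case True
  then show ?thesis
    using that[of 1 2] assms by auto
next
  case False
  then show ?thesis
    using that[of 0 1] that[of 0 2] assms by (cases "c = 1") auto
qed

lemma oscillating_codes:
  fixes s n :: nat and pre :: "nat \<Rightarrow> nat"
  assumes "s > 2" and "n \<ge> 1" and "\<And>i. i < n \<Longrightarrow> pre i < s"
  obtains \<alpha>1 \<alpha>2 \<alpha>3 where
    "\<And>\<alpha>. \<alpha> \<in> {\<alpha>1, \<alpha>2, \<alpha>3} \<Longrightarrow> (\<forall>i. \<alpha> i < s) \<and> (\<forall>i<n. \<alpha> i = pre i)"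
    "digit_value s \<alpha>1 < digit_value s \<alpha>2" "digit_value s \<alpha>2 < digit_value s \<alpha>3"
    "beta_seq A \<alpha>1 = beta_seq A \<alpha>3"
    "digit_value 2 (beta_seq A \<alpha>1) \<noteq> digit_value 2 (beta_seq A \<alpha>2)"
proof -
  obtain d e where de: "d < e" "e < s" "d \<noteq> pre (n - 1)" "e \<noteq> pre (n - 1)"
    using two_digits_avoiding[OF assms(1)] .
  define \<alpha>1 \<alpha>2 \<alpha>3 where "\<alpha>1 = (\<lambda>i. if i < n then pre i else d)"
    and "\<alpha>2 = (\<lambda>i. if i < n then pre i else if i = n then d else e)"
    and "\<alpha>3 = (\<lambda>i. if i < n then pre i else e)"
  have "s > 1"
    using assms(1) by simp
  note tail_order = digit_value_tail_order[where n = n and pre = pre, OF this de(1)]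
  note tail_betas = beta_seq_tail_codes[where A = A and n = n and pre = pre and d = d and e = e, OF assms(2) de(3,4)]
  show ?thesis
  proof (rule that)
    show "(\<forall>i. \<alpha> i < s) \<and> (\<forall>i<n. \<alpha> i = pre i)" if "\<alpha> \<in> {\<alpha>1, \<alpha>2, \<alpha>3}" for \<alpha>
      using that assms(3) de(1,2) by (auto simp: \<alpha>1_def \<alpha>2_def \<alpha>3_def)
  qed (use tail_order tail_betas de(1) in \<open>simp_all add: \<alpha>1_def \<alpha>2_def \<alpha>3_def\<close>)
qed

lemma mono_or_antimono_on_comp:
  fixes f :: "'b::ord \<Rightarrow> 'c::ord" and g :: "'a::ord \<Rightarrow> 'b"
  assumes "mono_on A f \<or> antimono_on A f" and "mono_on B g \<or> antimono_on B g" and "g ` B \<subseteq> A"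
  shows "mono_on B (f \<circ> g) \<or> antimono_on B (f \<circ> g)"
  using assms(1,2)
  by (elim disjE) (use assms(3) in \<open>auto simp: monotone_on_def image_subset_iff\<close>)+

lemma monotone_on_between_eq:
  fixes f :: "'a::order \<Rightarrow> 'b::order"
  assumes "mono_on S f \<or> antimono_on S f" and "x \<in> S" "y \<in> S" "z \<in> S"
    and "x < y \<and> y < z \<or> z < y \<and> y < x" and "f x = f z"
  shows "f y = f x"
proof -
  have "x \<le> y \<and> y \<le> z \<or> z \<le> y \<and> y \<le> x"
    using assms(5) by (auto simp: less_le)
  then have "f x \<le> f y \<and> f y \<le> f z \<or> f z \<le> f y \<and> f y \<le> f x"
    using assms(1-4) monotone_onD[of S "(\<le>)" "(\<le>)" f] monotone_onD[of S "(\<le>)" "(\<ge>)" f] by blast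
  then show ?thesis
    using assms(6) by (auto intro: order.antisym)
qed

lemma unit_homeo_strict:
  assumes "unit_homeo h"
  shows "(\<forall>x\<in>{0..1}. \<forall>y\<in>{0..1}. x < y \<longrightarrow> h x < h y) \<or>
         (\<forall>x\<in>{0..1}. \<forall>y\<in>{0..1}. x < y \<longrightarrow> h y < h x)"
  using assms unfolding unit_homeo_def by (auto simp: monotone_on_def)

lemma unit_homeo_inj:
  assumes "unit_homeo h"
  shows "inj_on h {0..1}"
proof (rule inj_onI, rule ccontr)
  fix x y assume "x \<in> {0..1}" "y \<in> {0..1}" "h x = h y" "x \<noteq> y"
  then show False
    using unit_homeo_strict[OF assms] by (cases "x < y") (fastforce simp: not_less_iff_gr_or_eq)+
qed

lemma unit_homeo_mono_or_antimono:
  assumes "unit_homeo h"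
  shows "mono_on {0..1} h \<or> antimono_on {0..1} h"
  using unit_homeo_strict[OF assms] by (auto simp: monotone_on_def le_less)

lemma unit_homeo_vimage_interval:
  assumes "unit_homeo h" and "0 \<le> a" "a < b" "b \<le> 1"
  obtains p q where "0 \<le> p" "p < q" "q \<le> 1" "h ` {p<..<q} \<subseteq> {a<..<b}"
proof -
  have cont: "continuous_on {0..1} h" and onto: "h ` {0..1} = {0..1}"
    using assms(1) unfolding unit_homeo_def by blast+
  have "(a + b) / 2 \<in> {0..1}"
    using assms by auto
  then obtain u where u: "u \<in> {0..1}" "h u = (a + b) / 2"
    using onto by (metis imageE)
  have "(b - a) / 2 > 0"
    using assms(3) by simp
  then obtain \<delta> where \<delta>: "\<delta> > 0" "\<forall>v\<in>{0..1}. dist v u < \<delta> \<longrightarrow> dist (h v) (h u) < (b - a) / 2"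
    using cont u(1) unfolding continuous_on_iff by metis
  define p q where "p = max 0 (u - \<delta>)" and "q = min 1 (u + \<delta>)"
  have "0 \<le> p" "p < q" "q \<le> 1"
    using u(1) \<delta>(1) by (auto simp: p_def q_def)
  have inside: "h v \<in> {a<..<b}" if "p < v" "v < q" for v
  proof -
    have "v \<in> {0..1}" "dist v u < \<delta>"
      using that by (auto simp: p_def q_def dist_real_def)
    then have "dist (h v) ((a + b) / 2) < (b - a) / 2"
      using \<delta>(2) u(2) by auto
    then show ?thesis
      by (auto simp: dist_real_def abs_less_iff field_simps)
  qed
  show ?thesis
  proof (rule that)
    show "h ` {p<..<q} \<subseteq> {a<..<b}"
      using inside by auto
  qed fact+
qed

lemma unit_homeo_pullback_monotone:
  assumes "unit_homeo h" and "0 \<le> a" "a < b" "b \<le> 1"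
    and "mono_on {a<..<b} f \<or> antimono_on {a<..<b} f"
  obtains p q where "0 \<le> p" "p < q" "q \<le> 1"
    and "mono_on {p<..<q} (f \<circ> h) \<or> antimono_on {p<..<q} (f \<circ> h)"
proof -
  obtain p q where pq: "0 \<le> p" "p < q" "q \<le> 1" and into: "h ` {p<..<q} \<subseteq> {a<..<b}"
    using unit_homeo_vimage_interval[OF assms(1-4)] .
  have "{p<..<q} \<subseteq> {0..1}"
    using pq by auto
  then have "mono_on {p<..<q} h \<or> antimono_on {p<..<q} h"
    using unit_homeo_mono_or_antimono[OF assms(1)] monotone_on_subset by blast
  from mono_or_antimono_on_comp[OF assms(5) this into] show ?thesis
    using pq by (intro that)
qed

theorem theorem3:
  fixes s :: nat and A0 A1 :: "nat set" and hs h2 f :: "real \<Rightarrow> real"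
  assumes "s > 2"
    and "A0 \<inter> A1 = {}" and "A0 \<union> A1 = {0..<s}"
    and "A0 \<noteq> {0..<s}" and "A1 \<noteq> {0..<s}"
    and "unit_homeo hs" and "unit_homeo h2"
    and f_def: "\<And>\<alpha>. (\<forall>n. \<alpha> n \<in> {0..<s}) \<Longrightarrow>
        f (hs (digit_value s \<alpha>)) = h2 (digit_value 2 (beta_seq A1 \<alpha>))"
  shows "\<not> (\<exists>a b. 0 \<le> a \<and> a < b \<and> b \<le> 1 \<and>
             (mono_on {a<..<b} f \<or> antimono_on {a<..<b} f))"
proof
  assume "\<exists>a b. 0 \<le> a \<and> a < b \<and> b \<le> 1 \<and> (mono_on {a<..<b} f \<or> antimono_on {a<..<b} f)"
  then obtain p q where pq: "0 \<le> p" "p < q" "q \<le> 1"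
    and monotone: "mono_on {p<..<q} (f \<circ> hs) \<or> antimono_on {p<..<q} (f \<circ> hs)"
    using unit_homeo_pullback_monotone[OF \<open>unit_homeo hs\<close>] by metis
  have "s > 1"
    using \<open>s > 2\<close> by simp
  obtain n pre where n: "n \<ge> 1" "\<And>i. i < n \<Longrightarrow> pre i < s"
    and cylinder: "\<And>d. (\<And>i. d i < s) \<Longrightarrow> (\<And>i. i < n \<Longrightarrow> d i = pre i) \<Longrightarrow>
                     p < digit_value s d \<and> digit_value s d < q"
    using cylinder_in_interval[OF \<open>s > 1\<close> pq] by metis
  obtain \<alpha>1 \<alpha>2 \<alpha>3 where codes: "\<And>\<alpha>. \<alpha> \<in> {\<alpha>1, \<alpha>2, \<alpha>3} \<Longrightarrow> (\<forall>i. \<alpha> i < s) \<and> (\<forall>i<n. \<alpha> i = pre i)"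
    and ordered: "digit_value s \<alpha>1 < digit_value s \<alpha>2" "digit_value s \<alpha>2 < digit_value s \<alpha>3"
    and same_beta: "beta_seq A1 \<alpha>1 = beta_seq A1 \<alpha>3"
    and other_beta: "digit_value 2 (beta_seq A1 \<alpha>1) \<noteq> digit_value 2 (beta_seq A1 \<alpha>2)"
    using oscillating_codes[of s n pre A1] \<open>s > 2\<close> n by blast
  have in_pq: "digit_value s \<alpha> \<in> {p<..<q}"
    and f_code: "f (hs (digit_value s \<alpha>)) = h2 (digit_value 2 (beta_seq A1 \<alpha>))"
    if "\<alpha> \<in> {\<alpha>1, \<alpha>2, \<alpha>3}" for \<alpha>
    using codes[OF that] cylinder[of \<alpha>] f_def[of \<alpha>] by auto
  have "f (hs (digit_value s \<alpha>2)) \<noteq> f (hs (digit_value s \<alpha>1))"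
    using unit_homeo_inj[OF \<open>unit_homeo h2\<close>] digit_value_beta_seq_in_unit other_beta f_code
    by (auto dest: inj_onD)
  moreover have "f (hs (digit_value s \<alpha>2)) = f (hs (digit_value s \<alpha>1))"
    using monotone_on_between_eq[OF monotone in_pq[of \<alpha>1] in_pq[of \<alpha>2] in_pq[of \<alpha>3]]
      ordered f_code same_beta
    by simp
  ultimately show False
    by contradiction
qed

end
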